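(* Let $r,a,b$ be positive integers with $\gcd(r,a)=\gcd(r,b)=1$. Then the isolated cyclic quotient singularity $\frac{1}{r}(a,b)$ is a T-singularity if and only if $r\mid(a+b)^2$.
   Context: $\frac{1}{r}(a,b)$ denotes the cyclic quotient singularity $\mathbb{C}^2/\mu_r$ with $\zeta\cdot(x,y)=(\zeta^ax,\zeta^by)$; two such are isomorphic in particular when one is obtained from the other by multiplying $(a,b)$ by an integer coprime to $r$ or swapping $a$ and $b$. A T-singularity is a quotient surface singularity admitting a $\mathbb{Q}$-Gorenstein one-parameter smoothing; by Kollár–Shepherd-Barron, the cyclic quotient T-singularities are exactly those isomorphic to $\frac{1}{nd^2}(1,dna-1)$ for positive integers $n,d,a$ with $\gcd(d,a)=1$. *)

theory Defs
  imports "HOL-Number_Theory.Number_Theory"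
begin

text \<open>A cyclic quotient singularity 1/r(a,b) is encoded by the triple (r,a,b) of integers.
  Isomorphism of isolated cyclic quotient singularities: same order r, and the weights
  agree modulo r up to multiplication by a unit modulo r and swapping the two weights.\<close>

definition cqs_iso :: "int \<Rightarrow> int \<Rightarrow> int \<Rightarrow> int \<Rightarrow> int \<Rightarrow> int \<Rightarrow> bool" where
  "cqs_iso r a b r' a' b' \<longleftrightarrow> r = r' \<and>
     (\<exists>u. coprime u r \<and>
        (([a' = u * a] (mod r) \<and> [b' = u * b] (mod r)) \<or>
         ([a' = u * b] (mod r) \<and> [b' = u * a] (mod r))))"

text \<open>Cyclic quotient T-singularity (Kollar--Shepherd-Barron): isomorphic to
  1/(n d^2)(1, d n a - 1) with n, d, a positive and gcd(d,a) = 1.\<close>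

definition cqs_T_sing :: "int \<Rightarrow> int \<Rightarrow> int \<Rightarrow> bool" where
  "cqs_T_sing r a b \<longleftrightarrow>
     (\<exists>n d c. n > 0 \<and> d > 0 \<and> c > 0 \<and> coprime d c \<and>
        cqs_iso r a b (n * d^2) 1 (d * n * c - 1))"

end

theory Submission
  imports Defs
begin

text \<open>If \<open>1/(nd\<^sup>2)(a,b) \<cong> 1/(nd\<^sup>2)(1, dnc - 1)\<close> via the unit \<open>u\<close>, then \<open>u(a+b) \<equiv> dnc\<close>,
  whose square is divisible by \<open>nd\<^sup>2\<close>; cancelling the unit \<open>u\<^sup>2\<close> gives \<open>r | (a+b)\<^sup>2\<close>.
  Conversely, if \<open>r | (a+b)\<^sup>2\<close> then \<open>g = gcd(r, a+b)\<close> satisfies \<open>r | g\<^sup>2\<close>, so \<open>d = r/g\<close>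
  divides \<open>g\<close>; with \<open>n = g/d\<close> one gets \<open>r = nd\<^sup>2\<close> and \<open>a + b = dnk\<close> with \<open>gcd(d,k) = 1\<close>.
  Scaling by an inverse \<open>u\<close> of \<open>a\<close> turns \<open>(a,b)\<close> into \<open>(1, dnuk - 1)\<close>, and \<open>uk\<close> may be
  replaced by any positive \<open>c \<equiv> uk (mod d)\<close>.\<close>

lemma dvd_square_imp_dvd_gcd_square:
  fixes r s :: int
  assumes "r dvd s^2"
  shows "r dvd (gcd r s)^2"
proof -
  obtain x y where xy: "x * r + y * s = gcd r s"
    using bezout_int by metis
  have "(gcd r s)^2 = r * (x^2 * r + 2 * x * y * s) + y^2 * s^2"
    by (simp flip: xy add: algebra_simps power2_eq_square)
  with assms show ?thesis
    by (metis dvd_add dvd_mult dvd_triv_left)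
qed

lemma dvd_square_decompose:
  fixes r s :: int
  assumes "r > 0" and "r dvd s^2"
  obtains n d k where "n > 0" "d > 0" "r = n * d^2" "s = d * n * k" "coprime d k"
proof -
  define g where "g = gcd r s"
  define d where "d = r div g"
  define k where "k = s div g"
  have g_pos: "g > 0" and r_eq: "r = g * d" and s_eq: "s = g * k"
    using \<open>r > 0\<close> by (simp_all add: g_def d_def k_def)
  have d_pos: "d > 0"
    using r_eq g_pos \<open>r > 0\<close> by (simp add: zero_less_mult_iff)
  have "r dvd g * g"
    using dvd_square_imp_dvd_gcd_square[OF \<open>r dvd s^2\<close>]
    by (simp add: g_def power2_eq_square)
  then have "d dvd g"
    using g_pos by (simp add: r_eq)
  then obtain n where g_eq: "g = d * n"
    by blast
  have "n > 0"
    using g_eq g_pos d_pos by (simp add: zero_less_mult_iff)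
  moreover have "coprime d k"
    using div_gcd_coprime[of r s] \<open>r > 0\<close> by (simp add: d_def k_def g_def)
  moreover have "r = n * d^2" and "s = d * n * k"
    using r_eq s_eq g_eq by (simp_all add: power2_eq_square)
  ultimately show ?thesis
    using that d_pos by blast
qed

lemma exists_pos_coprime_cong:
  fixes d x :: int
  assumes "d > 0" and "coprime d x"
  obtains c where "c > 0" "coprime d c" "[c = x] (mod d)"
proof
  show "x mod d + d > 0"
    using \<open>d > 0\<close> pos_mod_sign[of d x] by linarith
  show "[x mod d + d = x] (mod d)"
    by (simp add: cong_def)
  then show "coprime d (x mod d + d)"
    using assms(2) cong_imp_coprime cong_sym coprime_commute by metis
qed

lemma cong_unit_weights_imp_dvd_sum_square:
  fixes n d c u a b :: int
  assumes "coprime u (n * d^2)"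
    and "[1 = u * a] (mod n * d^2)" and "[d * n * c - 1 = u * b] (mod n * d^2)"
  shows "n * d^2 dvd (a + b)^2"
proof -
  have "[d * n * c = u * (a + b)] (mod n * d^2)"
    using cong_add[OF assms(2,3)] by (simp add: algebra_simps)
  then have "[(d * n * c)^2 = u^2 * (a + b)^2] (mod n * d^2)"
    using cong_pow by (fastforce simp: power_mult_distrib)
  moreover have "[(d * n * c)^2 = 0] (mod n * d^2)"
    by (simp add: cong_0_iff power2_eq_square)
  ultimately have "n * d^2 dvd u^2 * (a + b)^2"
    by (metis cong_0_iff cong_sym cong_trans)
  then show ?thesis
    using assms(1) by (simp add: coprime_commute coprime_dvd_mult_right_iff)
qed

lemma cong_unit_second_weight:
  fixes n d k u c a b :: int
  assumes "a + b = d * n * k" and "[u * a = 1] (mod n * d^2)" and "[c = u * k] (mod d)"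
  shows "[d * n * c - 1 = u * b] (mod n * d^2)"
proof -
  have "[d * n * c = d * n * (u * k)] (mod d * n * d)"
    using assms(3) by (simp add: cong_iff_dvd_diff flip: right_diff_distrib)
  then have "[d * n * c = u * (a + b)] (mod n * d^2)"
    using assms(1) by (simp add: power2_eq_square algebra_simps)
  from cong_diff[OF this cong_sym[OF assms(2)]] show ?thesis
    by (simp add: algebra_simps)
qed

lemma cqs_iso_T_imp_dvd_sum_square:
  fixes r a b n d c :: int
  assumes "cqs_iso r a b (n * d^2) 1 (d * n * c - 1)"
  shows "r dvd (a + b)^2"
proof -
  obtain u where r: "r = n * d^2" and u: "coprime u (n * d^2)"
    and weights: "([1 = u * a] (mod n * d^2) \<and> [d * n * c - 1 = u * b] (mod n * d^2)) \<or>
       ([1 = u * b] (mod n * d^2) \<and> [d * n * c - 1 = u * a] (mod n * d^2))"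
    using assms unfolding cqs_iso_def by blast
  from weights show ?thesis
  proof
    assume "[1 = u * a] (mod n * d^2) \<and> [d * n * c - 1 = u * b] (mod n * d^2)"
    then show ?thesis
      using cong_unit_weights_imp_dvd_sum_square[OF u] r by blast
  next
    assume "[1 = u * b] (mod n * d^2) \<and> [d * n * c - 1 = u * a] (mod n * d^2)"
    then have "r dvd (b + a)^2"
      using cong_unit_weights_imp_dvd_sum_square[OF u] r by blast
    then show ?thesis
      by (simp add: add.commute)
  qed
qed

theorem lemma3p6:
  fixes r a b :: int
  assumes "r > 0" and "a > 0" and "b > 0"
    and "coprime r a" and "coprime r b"
  shows "cqs_T_sing r a b \<longleftrightarrow> r dvd (a + b)^2"
proof
  assume "cqs_T_sing r a b"
  then show "r dvd (a + b)^2"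
    unfolding cqs_T_sing_def using cqs_iso_T_imp_dvd_sum_square by blast
next
  assume "r dvd (a + b)^2"
  then obtain n d k where n: "n > 0" and d: "d > 0" and r: "r = n * d^2"
    and sum: "a + b = d * n * k" and "coprime d k"
    using dvd_square_decompose \<open>r > 0\<close> by metis
  obtain u where u: "[u * a = 1] (mod r)"
    using cong_solve_coprime_int \<open>coprime r a\<close> by (metis coprime_commute mult.commute)
  then have "coprime u r"
    by (metis cong_imp_coprime cong_sym coprime_1_left coprime_mult_left_iff)
  then have "coprime d (u * k)"
    using \<open>coprime d k\<close> r by (simp add: coprime_commute)
  then obtain c where "c > 0" "coprime d c" and c: "[c = u * k] (mod d)"
    using exists_pos_coprime_cong d by blast
  have "[1 = u * a] (mod r)" and "[d * n * c - 1 = u * b] (mod r)"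
    using u cong_unit_second_weight[OF sum _ c] r by (simp_all add: cong_sym)
  with \<open>coprime u r\<close> have "cqs_iso r a b (n * d^2) 1 (d * n * c - 1)"
    unfolding cqs_iso_def r by blast
  with n d \<open>c > 0\<close> \<open>coprime d c\<close> show "cqs_T_sing r a b"
    unfolding cqs_T_sing_def by blast
qed

end
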